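(* For every integer $k\ge 0$, $$B_{k}=(-1)^{k+1}\sum_{n=1}^{k+1}\frac{1}{n^2}\Delta_{n}(k+1),\qquad\text{where}\quad \Delta_{n}(m)=\sum_{j=1}^{n}(-1)^{j}\binom{n}{j}j^{m}.$$
   Context: The Bernoulli numbers $B_k$ are defined by the generating function $\frac{t}{e^{t}-1}=\sum_{k=0}^{\infty}\frac{B_k}{k!}t^k$ for $|t|<2\pi$ (so $B_1=-1/2$). *)

theory Defs
  imports "HOL-Analysis.Analysis"
begin

text \<open>The point t = 0 is excluded since
  in Isabelle t/(e^t-1) evaluates to 0 there (division by zero), whereas the
  generating function has value 1 by continuity.  The coefficient sequence is
  unique (identity theorem for power series), so THE is well-defined.\<close>
definition bernoulli_seq :: "nat \<Rightarrow> real" where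
  "bernoulli_seq = (THE b. \<forall>t::real. t \<noteq> 0 \<and> \<bar>t\<bar> < 2 * pi \<longrightarrow>
      (\<lambda>k. b k / fact k * t ^ k) sums (t / (exp t - 1)))"

definition bernoulli :: "nat \<Rightarrow> real" where
  "bernoulli k = bernoulli_seq k"

definition Delta :: "nat \<Rightarrow> nat \<Rightarrow> int" where
  "Delta n m = (\<Sum>j=1..n. (-1) ^ j * int (n choose j) * int j ^ m)"

end

theory Submission
  imports Defs "HOL-Complex_Analysis.Cauchy_Integral_Formula"
begin

text \<open>
  Let u = 1 - exp(-x) and Li_s(x) = sum_{n>=1} x^n / n^s (as formal power series).
  Expanding u^n = sum_j (n choose j) (-1)^j exp(-jx) shows that the coefficient of x^m in
  u^n is (-1)^m Delta_n(m) / m!, so the claimed value of B_k / k! is the k-th coefficient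
  of the derivative of Li_2(u). Since x Li_2'(x) = Li_1(x) = -log(1 - x) and
  u' (exp x - 1) = exp(-x) (exp x - 1) = u, the chain rule gives
  (Li_2(u))' (exp x - 1) = Li_1(u) = x. Hence (Li_2(u))' is the reciprocal of the entire
  function (exp x - 1)/x, which has no zeros in |x| < 2 pi; there it converges to
  x/(exp x - 1), and uniqueness of power series coefficients identifies it with the
  generating function of the Bernoulli numbers.
\<close>

unbundle fps_syntax
unbundle no vec_syntax

definition fps_polylog :: "nat \<Rightarrow> 'a::field_char_0 fps" where
  "fps_polylog s = Abs_fps (\<lambda>n. if n = 0 then 0 else 1 / of_nat n ^ s)"

lemma fps_X_mult_deriv_fps_polylog:
  "fps_X * fps_deriv (fps_polylog (Suc s)) = (fps_polylog s :: 'a::field_char_0 fps)"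
proof (rule fps_ext)
  show "(fps_X * fps_deriv (fps_polylog (Suc s))) $ n = (fps_polylog s :: 'a fps) $ n"
    for n by (cases n) (simp_all add: fps_polylog_def fps_X_mult_nth field_simps del: of_nat_Suc)
qed

lemma fps_deriv_fps_polylog_1:
  "fps_deriv (fps_polylog 1) = (inverse (1 - fps_X) :: 'a::field_char_0 fps)"
proof -
  have "fps_deriv (fps_polylog 1) = (Abs_fps (\<lambda>_. 1) :: 'a fps)"
    by (rule fps_ext) (simp add: fps_polylog_def del: of_nat_Suc)
  also have "\<dots> = inverse (1 - fps_X)"
    by (simp flip: fps_inverse_gp')
  finally show ?thesis .
qed

lemma fps_deriv_one_minus_fps_exp_neg:
  "fps_deriv (1 - fps_exp (-1)) = (fps_exp (-1) :: 'a::field_char_0 fps)"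
  by (simp flip: fps_const_neg)

lemma fps_polylog_1_compose_one_minus_exp_neg:
  "fps_polylog 1 oo (1 - fps_exp (-1)) = (fps_X :: 'a::field_char_0 fps)"
proof -
  let ?u = "1 - fps_exp (-1) :: 'a fps"
  have u0: "?u $ 0 = 0" by simp
  have "inverse (1 - fps_X) oo ?u = inverse ((1 - fps_X) oo ?u)"
    by (rule fps_inverse_compose[OF u0]) simp
  also have "(1 - fps_X) oo ?u = fps_exp (-1)"
    by (simp add: fps_compose_sub_distrib u0)
  also have "inverse (fps_exp (-1)) = (fps_exp 1 :: 'a fps)"
    by (simp add: fps_exp_neg)
  finally have "fps_deriv (fps_polylog 1 oo ?u) = fps_exp 1 * fps_exp (-1)"
    by (simp only: fps_compose_deriv[OF u0] fps_deriv_fps_polylog_1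
        fps_deriv_one_minus_fps_exp_neg)
  also have "\<dots> = fps_deriv fps_X"
    by (simp flip: fps_exp_add_mult)
  finally show ?thesis
    unfolding fps_deriv_eq_iff by (simp add: fps_polylog_def)
qed

lemma fps_deriv_fps_polylog_compose_one_minus_exp_neg:
  "fps_deriv (fps_polylog (Suc s) oo (1 - fps_exp (-1))) * (fps_exp 1 - 1) =
     (fps_polylog s oo (1 - fps_exp (-1)) :: 'a::field_char_0 fps)"
proof -
  let ?u = "1 - fps_exp (-1) :: 'a fps"
  have u0: "?u $ 0 = 0" by simp
  have "fps_exp (-1) * (fps_exp 1 - 1) = ?u"
    by (simp add: algebra_simps flip: fps_exp_add_mult)
  hence "fps_deriv (fps_polylog (Suc s) oo ?u) * (fps_exp 1 - 1) =
           (fps_deriv (fps_polylog (Suc s)) oo ?u) * (fps_X oo ?u)"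
    by (simp only: fps_compose_deriv[OF u0] fps_deriv_one_minus_fps_exp_neg mult.assoc
        fps_X_fps_compose_startby0[OF u0])
  also have "\<dots> = (fps_X * fps_deriv (fps_polylog (Suc s))) oo ?u"
    by (simp add: fps_compose_mult_distrib[OF u0] mult.commute)
  finally show ?thesis
    by (simp only: fps_X_mult_deriv_fps_polylog)
qed

lemma fps_compose_fps_polylog_nth:
  "(fps_polylog s oo g) $ m = (\<Sum>n=1..m. (g ^ n) $ m / of_nat n ^ s :: 'a::field_char_0)"
proof -
  have "{0..m} = insert 0 {1..m}" by auto
  thus ?thesis by (simp add: fps_compose_nth fps_polylog_def)
qed

lemma one_minus_fps_exp_neg_power_nth:
  assumes "m \<ge> 1"
  shows "((1 - fps_exp (-1)) ^ n) $ m = ((-1) ^ m * of_int (Delta n m) / fact m :: 'a::field_char_0)"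
proof -
  have "(1 - fps_exp (-1) :: 'a fps) ^ n = (- fps_exp (-1) + 1) ^ n" by simp
  also have "\<dots> = (\<Sum>j\<le>n. of_nat (n choose j) * (- fps_exp (-1)) ^ j * 1 ^ (n - j))"
    by (rule binomial_ring)
  also have "\<dots> = (\<Sum>j\<le>n. fps_const (of_nat (n choose j) * (-1) ^ j) * fps_exp (- of_nat j))"
  proof (intro sum.cong refl)
    fix j
    have "(- fps_exp (-1) :: 'a fps) ^ j = (-1) ^ j * fps_exp (- of_nat j)"
      by (subst power_minus) (simp only: fps_exp_power_mult mult_minus1_right)
    also have "(-1 :: 'a fps) ^ j = fps_const ((-1) ^ j)"
      by (metis fps_const_neg fps_const_1_eq_1 fps_const_power)
    finally have "(- fps_exp (-1) :: 'a fps) ^ j = fps_const ((-1) ^ j) * fps_exp (- of_nat j)" .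
    thus "of_nat (n choose j) * (- fps_exp (-1)) ^ j * 1 ^ (n - j) =
            fps_const (of_nat (n choose j) * (-1) ^ j) * (fps_exp (- of_nat j) :: 'a fps)"
      by (simp only: power_one mult_1_right mult.assoc fps_of_nat [symmetric]
          fps_const_mult [symmetric])
  qed
  finally have "(1 - fps_exp (-1) :: 'a fps) ^ n =
          (\<Sum>j\<le>n. fps_const (of_nat (n choose j) * (-1) ^ j) * fps_exp (- of_nat j))" .
  hence "((1 - fps_exp (-1)) ^ n) $ m =
           (\<Sum>j\<le>n. of_nat (n choose j) * (-1) ^ j * (- of_nat j) ^ m / fact m :: 'a)"
    by (simp add: fps_sum_nth)
  also have "\<dots> = (\<Sum>j=1..n. of_nat (n choose j) * (-1) ^ j * (- of_nat j) ^ m / fact m)"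
  proof -
    have "{..n} = insert 0 {1..n}" by auto
    thus ?thesis using assms by (simp add: zero_power)
  qed
  also have "\<dots> = (-1) ^ m * of_int (Delta n m) / fact m"
    unfolding Delta_def of_int_sum sum_divide_distrib sum_distrib_left
    by (intro sum.cong refl) (simp add: power_minus[of "of_nat _"] mult_ac)
  finally show ?thesis .
qed

lemma fps_deriv_fps_polylog_2_compose_nth:
  "fps_deriv (fps_polylog 2 oo (1 - fps_exp (-1))) $ k =
     ((-1) ^ (k + 1) * (\<Sum>n=1..k+1. of_int (Delta n (k + 1)) / of_nat n ^ 2) / fact k
       :: 'a::field_char_0)"
proof -
  let ?D = "\<lambda>n. of_int (Delta n (k + 1)) / of_nat n ^ 2 :: 'a"
  have "fps_deriv (fps_polylog 2 oo (1 - fps_exp (-1))) $ k =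
          of_nat (k + 1) * ((-1) ^ (k + 1) / fact (k + 1) * sum ?D {1..k+1})"
    unfolding fps_deriv_nth sum_distrib_left fps_compose_fps_polylog_nth Suc_eq_plus1
    by (intro arg_cong2[where f = "(*)"] sum.cong refl)
      (simp add: one_minus_fps_exp_neg_power_nth)
  also have "\<dots> = of_nat (k + 1) / fact (k + 1) * ((-1) ^ (k + 1) * sum ?D {1..k+1})"
    by (simp only: mult_ac times_divide_eq_left times_divide_eq_right)
  also have "of_nat (k + 1) / fact (k + 1) = (1 / fact k :: 'a)"
    by (simp add: field_simps del: of_nat_Suc)
  finally show ?thesis by simp
qed

lemma subdegree_fps_exp_minus_1: "subdegree (fps_exp 1 - 1 :: 'a::field_char_0 fps) = 1"
  by (rule subdegreeI) auto

lemma fps_conv_radius_exp_minus_1: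
  "fps_conv_radius (fps_exp 1 - 1 :: 'a::{banach, real_normed_field} fps) = \<infinity>"
  using fps_conv_radius_diff[of "fps_exp (1::'a)" 1] by simp

lemma eval_fps_shift_exp_minus_1:
  fixes z :: "'a::{banach, real_normed_field}"
  shows "eval_fps (fps_shift 1 (fps_exp 1 - 1)) z = (if z = 0 then 1 else (exp z - 1) / z)"
proof -
  have "eval_fps (fps_shift 1 (fps_exp 1 - 1)) z =
          (if z = 0 then (fps_exp 1 - 1) $ 1 else eval_fps (fps_exp 1 - 1) z / z ^ 1)"
    by (rule eval_fps_shift)
      (simp only: subdegree_fps_exp_minus_1 order_refl, simp add: fps_conv_radius_exp_minus_1)
  also have "eval_fps (fps_exp 1 - 1) z = exp z - 1"
    by (subst eval_fps_diff) auto
  finally show ?thesis by simp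
qed

lemma fps_shift_exp_minus_1_times_X:
  "fps_shift 1 (fps_exp 1 - 1) * fps_X = (fps_exp 1 - 1 :: 'a::field_char_0 fps)"
  by (rule fps_shift_times_fps_X) (simp only: subdegree_fps_exp_minus_1 order_refl)

lemma inverse_fps_shift_exp_minus_1:
  fixes f :: "'a::field_char_0 fps"
  assumes "f * (fps_exp 1 - 1) = fps_X"
  shows "inverse (fps_shift 1 (fps_exp 1 - 1)) = f"
proof (rule fps_inverse_unique)
  have "fps_shift 1 (fps_exp 1 - 1) * f * fps_X = f * (fps_shift 1 (fps_exp 1 - 1) * fps_X)"
    by (simp only: mult_ac)
  also have "\<dots> = 1 * fps_X"
    by (simp only: fps_shift_exp_minus_1_times_X assms mult_1)
  finally show "fps_shift 1 (fps_exp 1 - 1) * f = 1"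
    by (simp only: mult_cancel_right fps_X_neq_zero simp_thms)
qed

lemma exp_neq_1_if_norm_less_2pi:
  fixes z :: complex
  assumes "z \<noteq> 0" "norm z < 2 * pi"
  shows "exp z \<noteq> 1"
proof
  assume "exp z = 1"
  then obtain n :: int where n: "Re z = 0" "Im z = of_int (2 * n) * pi"
    by (auto simp: exp_eq_1)
  with assms(1) have "n \<noteq> 0" using complex_eq_iff by fastforce
  hence "2 * pi \<le> \<bar>Im z\<bar>" using n(2) by (simp add: abs_mult)
  also have "\<bar>Im z\<bar> \<le> norm z" by (rule abs_Im_le_cmod)
  finally show False using assms(2) by simp
qed

lemma sums_div_exp_minus_1_if_fps_mult_eq_X:
  fixes f :: "complex fps"
  assumes f: "f * (fps_exp 1 - 1) = fps_X" and z: "z \<noteq> 0" "norm z < 2 * pi"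
  shows "(\<lambda>k. f $ k * z ^ k) sums (z / (exp z - 1))"
proof -
  let ?g = "fps_shift 1 (fps_exp 1 - 1) :: complex fps"
  have g_nz: "eval_fps ?g w \<noteq> 0" if "ereal (norm w) < ereal (2 * pi)" for w
    using that exp_neq_1_if_norm_less_2pi[of w] unfolding eval_fps_shift_exp_minus_1 by auto
  have f_eq: "inverse ?g = f"
    by (rule inverse_fps_shift_exp_minus_1[OF f])
  have radius: "ereal (2 * pi) \<le> fps_conv_radius f"
    using fps_conv_radius_inverse[of "ereal (2 * pi)" ?g, OF g_nz]
    unfolding f_eq by (simp add: fps_conv_radius_exp_minus_1)
  have "ereal (norm z) < fps_conv_radius f"
    by (rule less_le_trans[OF _ radius]) (simp add: z)
  hence "(\<lambda>k. f $ k * z ^ k) sums eval_fps f z"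
    by (rule sums_eval_fps)
  also have "eval_fps f z = inverse (eval_fps ?g z)"
    using z unfolding f_eq[symmetric]
    by (intro eval_fps_inverse[where r = "ereal (2 * pi)"] g_nz)
      (auto simp: fps_conv_radius_exp_minus_1)
  also have "inverse (eval_fps ?g z) = z / (exp z - 1)"
    using z unfolding eval_fps_shift_exp_minus_1 by simp
  finally show ?thesis .
qed

lemma powser_coeffs_unique:
  fixes a b :: "nat \<Rightarrow> 'a::{real_normed_field, banach}"
  assumes r: "0 < r"
    and a: "\<And>x. x \<noteq> 0 \<Longrightarrow> norm x < r \<Longrightarrow> (\<lambda>n. a n * x ^ n) sums f x"
    and b: "\<And>x. x \<noteq> 0 \<Longrightarrow> norm x < r \<Longrightarrow> (\<lambda>n. b n * x ^ n) sums f x"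
  shows "a = b"
proof -
  define d where "d n = a n - b n" for n
  have d_sums: "(\<lambda>n. d n * x ^ n) sums 0" if "x \<noteq> 0" "norm x < r" for x
    using sums_diff[OF a b, OF that that] by (simp add: d_def left_diff_distrib)
  have "((\<lambda>x. 0) \<longlongrightarrow> d 0) (at (0::'a))"
    by (rule powser_limit_0_strong[OF r d_sums])
  hence d0: "d 0 = 0"
    by (simp add: tendsto_const_iff)
  have "d m = 0" for m
  proof (rule ccontr)
    assume dm: "d m \<noteq> 0"
    with d0 have "m > 0" by (cases m) auto
    have d_sums': "(\<lambda>n. d n * (x - 0) ^ n) sums 0" if "norm (x - 0) < r" for x
      using d_sums[of x] d0 that by (cases "x = 0") auto
    show False
    proof (rule powser_0_nonzero[where f = "\<lambda>_. 0", OF r d_sums' refl dm \<open>m > 0\<close>])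
      fix s :: real
      assume "0 < s" and nonzero: "\<And>z::'a. z \<in> cball 0 s - {0} \<Longrightarrow> (0::'a) \<noteq> 0"
      have "of_real s \<in> cball 0 s - {0::'a}"
        using \<open>0 < s\<close> by simp
      from nonzero[OF this] show False by simp
    qed
  qed
  thus "a = b"
    by (simp add: fun_eq_iff d_def)
qed

lemma bernoulli_seq_eqI:
  assumes "\<And>t. t \<noteq> 0 \<Longrightarrow> \<bar>t\<bar> < 2 * pi \<Longrightarrow>
             (\<lambda>k. b k / fact k * t ^ k) sums (t / (exp t - 1))"
  shows "bernoulli_seq = b"
  unfolding bernoulli_seq_def
proof (rule the_equality)
  show "\<forall>t. t \<noteq> 0 \<and> \<bar>t\<bar> < 2 * pi \<longrightarrow> (\<lambda>k. b k / fact k * t ^ k) sums (t / (exp t - 1))"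
    using assms by blast
next
  fix c assume c: "\<forall>t. t \<noteq> 0 \<and> \<bar>t\<bar> < 2 * pi \<longrightarrow>
                        (\<lambda>k. c k / fact k * t ^ k) sums (t / (exp t - 1))"
  have "(\<lambda>k. c k / fact k) = (\<lambda>k. b k / fact k :: real)"
    by (rule powser_coeffs_unique[where r = "2 * pi" and f = "\<lambda>t. t / (exp t - 1)"])
      (use c assms in auto)
  thus "c = b"
    by (simp add: fun_eq_iff)
qed

lemma sums_Delta_formula:
  fixes t :: real
  assumes "t \<noteq> 0" "\<bar>t\<bar> < 2 * pi"
  shows "(\<lambda>k. (-1) ^ (k + 1) * (\<Sum>n=1..k+1. real_of_int (Delta n (k + 1)) / (real n)\<^sup>2) / fact k * t ^ k)
           sums (t / (exp t - 1))"
proof -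
  let ?f = "fps_deriv (fps_polylog 2 oo (1 - fps_exp (-1))) :: complex fps"
  have "?f * (fps_exp 1 - 1) = fps_polylog 1 oo (1 - fps_exp (-1))"
    using fps_deriv_fps_polylog_compose_one_minus_exp_neg[of 1] by (simp only: Suc_1)
  also have "\<dots> = fps_X"
    by (rule fps_polylog_1_compose_one_minus_exp_neg)
  finally have "?f * (fps_exp 1 - 1) = fps_X" .
  hence "(\<lambda>k. ?f $ k * of_real t ^ k) sums (of_real t / (exp (of_real t) - 1))"
    using assms by (intro sums_div_exp_minus_1_if_fps_mult_eq_X) auto
  hence "(\<lambda>k. ?f $ k * of_real t ^ k) sums of_real (t / (exp t - 1))"
    by (simp only: of_real_divide of_real_diff of_real_1 exp_of_real)
  moreover have "?f $ k * of_real t ^ k = of_real ((-1) ^ (k + 1) *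
      (\<Sum>n=1..k+1. real_of_int (Delta n (k + 1)) / (real n)\<^sup>2) / fact k * t ^ k)" for k
    unfolding fps_deriv_fps_polylog_2_compose_nth by simp
  ultimately show ?thesis
    by (simp only: sums_of_real_iff)
qed

theorem mainTheorem2:
  fixes k :: nat
  shows "bernoulli k = (-1) ^ (k + 1) * (\<Sum>n=1..k+1. real_of_int (Delta n (k + 1)) / (real n)\<^sup>2)"
proof -
  have "bernoulli_seq = (\<lambda>k. (-1) ^ (k + 1) *
          (\<Sum>n=1..k+1. real_of_int (Delta n (k + 1)) / (real n)\<^sup>2))"
    by (rule bernoulli_seq_eqI) (rule sums_Delta_formula)
  thus ?thesis
    unfolding bernoulli_def by (rule fun_cong)
qed

end
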